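(* Let $G=(V,E)$ be a finite loopless graph with $V\neq\emptyset$, with edge weights $\mathbf{v}=(v_e)_{e\in E}$, and let $q_1,q_2$ be indeterminates. Then \[ Z_G(q_2,\mathbf{v})=\sum_{\pi\in\Pi(V)}(q_2/q_1)^{\underline{|\pi|}}\prod_{B\in\pi}Z_{G[B]}(q_1,\mathbf{v}), \] equivalently \[ Z_G(q_2,\mathbf{v})=\sum_{\pi\in\Pi(V)}\Bigl(\prod_{j=0}^{|\pi|-1}(q_2-jq_1)\Bigr)\prod_{B\in\pi}\widehat{Z}_{G[B]}(q_1,\mathbf{v}), \] or \[ \widehat{Z}_G(q_2,\mathbf{v})=\sum_{\pi\in\Pi(V)}\Bigl(\prod_{j=1}^{|\pi|-1}(q_2-jq_1)\Bigr)\prod_{B\in\pi}\widehat{Z}_{G[B]}(q_1,\mathbf{v}). \]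
   Context: $Z_H(q,\mathbf{v})=\sum_{A\subseteq E(H)}q^{k(A)}\prod_{e\in A}v_e$ is the multivariate Tutte polynomial of a finite graph $H$, where $k(A)$ is the number of connected components of $(V(H),A)$, and $\widehat{Z}_H(q,\mathbf{v})=\sum_{A\subseteq E(H)}q^{k(A)-1}\prod_{e\in A}v_e$ (a polynomial, for $V(H)\ne\emptyset$). $\Pi(V)$ is the set of unordered partitions of $V$ into nonempty blocks, $|\pi|$ is the number of blocks, and $G[B]$ is the induced subgraph on $B$. For an element $r$, $r^{\underline{k}}=r(r-1)\cdots(r-k+1)$ is the falling factorial; the first identity is read in the field of rational functions in $q_1,q_2,\mathbf{v}$ (equivalently, with $q_2=rq_1$ and $r$ an indeterminate). *)

theory Defs
  imports Main "HOL-Library.Disjoint_Sets"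
begin

definition loopless_graph :: "'a set \<Rightarrow> 'e set \<Rightarrow> ('e \<Rightarrow> 'a set) \<Rightarrow> bool" where
  "loopless_graph V E ends \<longleftrightarrow> finite V \<and> finite E \<and>
     (\<forall>e\<in>E. ends e \<subseteq> V \<and> card (ends e) = 2)"

definition adj :: "('e \<Rightarrow> 'a set) \<Rightarrow> 'e set \<Rightarrow> ('a \<times> 'a) set" where
  "adj ends A = {(x, y). \<exists>e\<in>A. ends e = {x, y}}"

definition ncomp :: "'a set \<Rightarrow> ('e \<Rightarrow> 'a set) \<Rightarrow> 'e set \<Rightarrow> nat" where
  "ncomp V ends A = card (V // {(x, y). x \<in> V \<and> y \<in> V \<and> (x, y) \<in> (adj ends A)\<^sup>*})"

definition tutteZ :: "'a set \<Rightarrow> 'e set \<Rightarrow> ('e \<Rightarrow> 'a set) \<Rightarrow> 'r::comm_ring_1 \<Rightarrow> ('e \<Rightarrow> 'r) \<Rightarrow> 'r" where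
  "tutteZ V E ends q v = (\<Sum>A\<in>Pow E. q ^ ncomp V ends A * (\<Prod>e\<in>A. v e))"

text \<open>Reduced version \<open>\<widehat>Z\<close>_H(q, v) with q^(k(A)-1) (k(A) \<ge> 1 when V is nonempty).\<close>
definition tutteZhat :: "'a set \<Rightarrow> 'e set \<Rightarrow> ('e \<Rightarrow> 'a set) \<Rightarrow> 'r::comm_ring_1 \<Rightarrow> ('e \<Rightarrow> 'r) \<Rightarrow> 'r" where
  "tutteZhat V E ends q v = (\<Sum>A\<in>Pow E. q ^ (ncomp V ends A - 1) * (\<Prod>e\<in>A. v e))"

definition induced_edges :: "'e set \<Rightarrow> ('e \<Rightarrow> 'a set) \<Rightarrow> 'a set \<Rightarrow> 'e set" where
  "induced_edges E ends B = {e\<in>E. ends e \<subseteq> B}"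

definition ffall :: "'r::comm_ring_1 \<Rightarrow> nat \<Rightarrow> 'r" where
  "ffall r k = (\<Prod>j<k. r - of_nat j)"

end

theory Submission
  imports Defs
begin

text \<open>Expanding every \<open>Zhat\<close> of an induced subgraph as a sum over its edge sets and exchanging
  the sums, an edge set \<open>A\<close> of \<open>G\<close> contributes to a partition \<open>P\<close> exactly when every component
  of \<open>(V, A)\<close> lies inside a block of \<open>P\<close>, i.e. when \<open>P\<close> is coarser than the partition \<open>Q\<close> of \<open>V\<close>
  into components, and it then carries the weight \<open>q1 ^ (k(A) - |P|) * v^A\<close>. Everything therefore
  reduces to a homogeneous form of \<open>x ^ k = (\<Sum>P. ffall x |P|)\<close>, the sum over the set partitions
  of a \<open>k\<close>-set: for a partition \<open>Q\<close> with \<open>k\<close> blocks,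
  \<open>\<Sum> (\<Prod>j=1..<|P|. q2 - j q1) q1 ^ (k - |P|) = q2 ^ (k - 1)\<close>, summed over the coarsenings \<open>P\<close> of \<open>Q\<close>.
  This follows by adding the blocks of \<open>Q\<close> one at a time: the new block either stays a block
  on its own or joins one of the \<open>|P|\<close> existing blocks, and \<open>(q2 - |P| q1) + |P| q1 = q2\<close>.
  The other two forms follow from \<open>Z = q Zhat\<close> and from \<open>ffall (q2 / q1) n * q1 ^ n = (\<Prod>j<n. q2 - j q1)\<close>.\<close>

lemma partition_on_block_unique:
  assumes "partition_on X P" "B \<in> P" "B' \<in> P" "x \<in> B" "x \<in> B'"
  shows "B = B'"
  using assms unfolding partition_on_def pairwise_def disjnt_def by blast

lemma partition_on_block_subset: "partition_on X P \<Longrightarrow> B \<in> P \<Longrightarrow> B \<subseteq> X"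
  unfolding partition_on_def by blast

lemma partition_on_block_nonempty: "partition_on X P \<Longrightarrow> B \<in> P \<Longrightarrow> B \<noteq> {}"
  unfolding partition_on_def by blast

lemma partition_on_Diff_block:
  assumes "partition_on X P" "B \<in> P"
  shows "partition_on (X - B) (P - {B})"
proof -
  have "disjnt B (\<Union>(P - {B}))"
    using assms unfolding partition_on_def pairwise_def disjnt_def by blast
  moreover have "partition_on X (insert B (P - {B}))"
    using assms by (simp add: insert_absorb)
  ultimately show ?thesis
    using partition_on_insert by blast
qed

lemma partition_on_insert_block:
  assumes "partition_on X P" "C \<noteq> {}" "C \<inter> X = {}"
  shows "partition_on (X \<union> C) (insert C P)"
proof -
  have "\<Union>P = X"
    using assms(1) by (simp add: partition_on_def)
  then have "disjnt C (\<Union>P)"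
    using assms(3) by (simp add: disjnt_def)
  moreover have "X \<union> C - C = X"
    using assms(3) by blast
  ultimately show ?thesis
    using assms(1,2) by (simp add: partition_on_insert)
qed

definition join_block :: "'a set set \<Rightarrow> 'a set \<Rightarrow> 'a set \<Rightarrow> 'a set set" where
  "join_block P B C = insert (B \<union> C) (P - {B})"

lemma partition_on_join_block:
  assumes "partition_on X P" "B \<in> P" "C \<inter> X = {}"
  shows "partition_on (X \<union> C) (join_block P B C)"
proof -
  have rest: "partition_on (X - B) (P - {B})"
    using assms(1,2) by (rule partition_on_Diff_block)
  then have "\<Union>(P - {B}) = X - B"
    by (simp add: partition_on_def)
  then have "disjnt (B \<union> C) (\<Union>(P - {B}))"
    using assms(3) by (auto simp: disjnt_def)
  moreover have "B \<subseteq> X" "B \<noteq> {}"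
    using partition_on_block_subset[OF assms(1,2)] partition_on_block_nonempty[OF assms(1,2)] .
  moreover have "X \<union> C - (B \<union> C) = X - B"
    using assms(3) by blast
  ultimately show ?thesis
    unfolding join_block_def using rest by (auto simp: partition_on_insert)
qed

lemma partition_on_split_block:
  assumes "partition_on (X \<union> C) P" "D \<in> P" "C \<subset> D" "C \<inter> X = {}"
  shows "partition_on X (insert (D - C) (P - {D}))"
proof -
  have rest: "partition_on (X \<union> C - D) (P - {D})"
    using assms(1,2) by (rule partition_on_Diff_block)
  then have "\<Union>(P - {D}) = X \<union> C - D"
    by (simp add: partition_on_def)
  then have "disjnt (D - C) (\<Union>(P - {D}))"
    by (auto simp: disjnt_def)
  moreover have "D \<subseteq> X \<union> C"
    using partition_on_block_subset[OF assms(1,2)] .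
  moreover have "X - (D - C) = X \<union> C - D" "D - C \<noteq> {}"
    using assms(3,4) \<open>D \<subseteq> X \<union> C\<close> by blast+
  ultimately show ?thesis
    using rest by (auto simp: partition_on_insert)
qed

lemma refines_card_le:
  assumes "refines X Q P" "finite Q"
  shows "card P \<le> card Q"
proof -
  have P: "partition_on X P" and Q: "partition_on X Q" and coarser: "\<forall>C\<in>Q. \<exists>B\<in>P. C \<subseteq> B"
    using assms(1) unfolding refines_def by auto
  define block where "block C = (SOME B. B \<in> P \<and> C \<subseteq> B)" for C
  have "P \<subseteq> block ` Q"
  proof
    fix B assume B: "B \<in> P"
    then obtain x where x: "x \<in> B"
      using P partition_on_block_nonempty by blast
    then obtain C where C: "C \<in> Q" "x \<in> C"
      using B P Q partition_onD1 by blast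
    then have "block C \<in> P \<and> C \<subseteq> block C"
      unfolding block_def using coarser someI_ex[of "\<lambda>B. B \<in> P \<and> C \<subseteq> B"] by blast
    then have "block C = B"
      using partition_on_block_unique[OF P _ B] x C by blast
    then show "B \<in> block ` Q"
      using C by blast
  qed
  then have "card P \<le> card (block ` Q)"
    using assms(2) by (simp add: card_mono)
  also have "\<dots> \<le> card Q"
    using assms(2) by (rule card_image_le)
  finally show ?thesis .
qed

lemma refines_insert_block:
  assumes "refines X Q P" "C \<noteq> {}" "C \<inter> X = {}"
  shows "refines (X \<union> C) (insert C Q) (insert C P)"
proof -
  have P: "partition_on X P" and Q: "partition_on X Q" and coarser: "\<forall>E\<in>Q. \<exists>B\<in>P. E \<subseteq> B"
    using assms(1) unfolding refines_def by auto
  have "\<forall>E\<in>insert C Q. \<exists>B\<in>insert C P. E \<subseteq> B"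
    using coarser by auto
  with partition_on_insert_block[OF P assms(2,3)] partition_on_insert_block[OF Q assms(2,3)]
  show ?thesis
    unfolding refines_def by (intro conjI)
qed

lemma refines_join_block:
  assumes "refines X Q P" "B \<in> P" "C \<noteq> {}" "C \<inter> X = {}"
  shows "refines (X \<union> C) (insert C Q) (join_block P B C)"
proof -
  have P: "partition_on X P" and Q: "partition_on X Q" and coarser: "\<forall>E\<in>Q. \<exists>B\<in>P. E \<subseteq> B"
    using assms(1) unfolding refines_def by auto
  have "\<exists>B'\<in>join_block P B C. E \<subseteq> B'" if "E \<in> insert C Q" for E
  proof (cases "E = C")
    case True
    then show ?thesis
      unfolding join_block_def by blast
  next
    case False
    with that have "E \<in> Q"
      by simp
    then obtain B' where "B' \<in> P" "E \<subseteq> B'"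
      using coarser by blast
    then show ?thesis
      unfolding join_block_def by (cases "B' = B") auto
  qed
  with partition_on_join_block[OF P assms(2,4)] partition_on_insert_block[OF Q assms(3,4)]
  show ?thesis
    unfolding refines_def by (intro conjI) auto
qed

lemma refines_Diff_block:
  assumes "refines (X \<union> C) (insert C Q) P'" "C \<in> P'" "partition_on X Q" "C \<inter> X = {}"
  shows "refines X Q (P' - {C})"
proof -
  have P': "partition_on (X \<union> C) P'" and coarser: "\<forall>E\<in>insert C Q. \<exists>B\<in>P'. E \<subseteq> B"
    using assms(1) unfolding refines_def by auto
  have "X \<union> C - C = X"
    using assms(4) by blast
  then have "partition_on X (P' - {C})"
    using partition_on_Diff_block[OF P' assms(2)] by simp
  moreover have "\<exists>B\<in>P' - {C}. E \<subseteq> B" if "E \<in> Q" for E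
  proof -
    obtain B where "B \<in> P'" "E \<subseteq> B"
      using coarser \<open>E \<in> Q\<close> by blast
    moreover have "B \<noteq> C"
      using \<open>E \<subseteq> B\<close> partition_on_block_subset[OF assms(3) that] partition_on_block_nonempty[OF assms(3) that]
        assms(4) by blast
    ultimately show ?thesis
      by blast
  qed
  ultimately show ?thesis
    using assms(3) unfolding refines_def by blast
qed

lemma refines_split_block:
  assumes "refines (X \<union> C) (insert C Q) P'" "D \<in> P'" "C \<subset> D" "partition_on X Q" "C \<inter> X = {}"
  shows "refines X Q (insert (D - C) (P' - {D}))"
proof -
  have P': "partition_on (X \<union> C) P'" and coarser: "\<forall>E\<in>insert C Q. \<exists>B\<in>P'. E \<subseteq> B"
    using assms(1) unfolding refines_def by auto
  have "\<exists>B\<in>insert (D - C) (P' - {D}). E \<subseteq> B" if "E \<in> Q" for E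
  proof -
    obtain B where "B \<in> P'" "E \<subseteq> B"
      using coarser \<open>E \<in> Q\<close> by blast
    then show ?thesis
      using partition_on_block_subset[OF assms(4) that] assms(5) by (cases "B = D") auto
  qed
  then show ?thesis
    using partition_on_split_block[OF P' assms(2,3,5)] assms(4) unfolding refines_def by blast
qed

lemma refines_insert_blockE:
  assumes "refines (X \<union> C) (insert C Q) P'" "partition_on X Q" "C \<noteq> {}" "C \<inter> X = {}"
  obtains P where "refines X Q P" "P' = insert C P"
    | P B where "refines X Q P" "B \<in> P" "P' = join_block P B C"
proof -
  have P': "partition_on (X \<union> C) P'"
    using assms(1) unfolding refines_def by auto
  from assms(1) obtain D where D: "D \<in> P'" "C \<subseteq> D"
    unfolding refines_def by auto
  show thesis
  proof (cases "D = C")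
    case True
    then have "P' = insert C (P' - {C})"
      using D by auto
    then show thesis
      using refines_Diff_block[OF assms(1) _ assms(2,4)] D True that(1) by blast
  next
    case False
    then have "C \<subset> D"
      using D(2) by auto
    have "D - C \<notin> P' - {D}"
      using disjointD[OF partition_onD2[OF P'] _ D(1)] \<open>C \<subset> D\<close> by blast
    then have "join_block (insert (D - C) (P' - {D})) (D - C) C = P'"
      unfolding join_block_def using D by (auto simp: Un_absorb2 insert_absorb)
    then show thesis
      using refines_split_block[OF assms(1) D(1) \<open>C \<subset> D\<close> assms(2,4)] that(2) by blast
  qed
qed

lemma refines_insert_block_eq:
  assumes "partition_on X Q" "C \<noteq> {}" "C \<inter> X = {}"
  shows "{P'. refines (X \<union> C) (insert C Q) P'} =
    insert C ` {P. refines X Q P} \<union> (\<lambda>(P, B). join_block P B C) ` (SIGMA P:{P. refines X Q P}. P)"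
proof (intro equalityI subsetI)
  fix P' assume "P' \<in> {P'. refines (X \<union> C) (insert C Q) P'}"
  then have "refines (X \<union> C) (insert C Q) P'"
    by simp
  then show "P' \<in> insert C ` {P. refines X Q P} \<union> (\<lambda>(P, B). join_block P B C) ` (SIGMA P:{P. refines X Q P}. P)"
    by (rule refines_insert_blockE[OF _ assms]) auto
next
  fix P' assume "P' \<in> insert C ` {P. refines X Q P} \<union> (\<lambda>(P, B). join_block P B C) ` (SIGMA P:{P. refines X Q P}. P)"
  then show "P' \<in> {P'. refines (X \<union> C) (insert C Q) P'}"
    using refines_insert_block[OF _ assms(2,3)] refines_join_block[OF _ _ assms(2,3)] by auto
qed

lemma inj_on_join_block:
  assumes "\<And>P. P \<in> R \<Longrightarrow> \<Union>P \<subseteq> X" "C \<noteq> {}" "C \<inter> X = {}"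
  shows "inj_on (\<lambda>(P, B). join_block P B C) (SIGMA P:R. P)"
proof (rule inj_onI, clarsimp)
  fix P B P2 B2
  assume P: "P \<in> R" "B \<in> P" and P2: "P2 \<in> R" "B2 \<in> P2"
    and eq: "join_block P B C = join_block P2 B2 C"
  have join_notin: "B' \<union> C \<notin> P'" if "P' \<in> R" for P' B'
    using assms(1)[OF that] assms(2,3) by auto
  have "B \<union> C \<in> join_block P B C"
    unfolding join_block_def by simp
  then have "B \<union> C \<in> join_block P2 B2 C"
    unfolding eq .
  then have "B \<union> C = B2 \<union> C"
    using join_notin[OF P2(1)] unfolding join_block_def by auto
  moreover have "B = (B \<union> C) \<inter> X" "B2 = (B2 \<union> C) \<inter> X"
    using assms(1)[OF P(1)] assms(1)[OF P2(1)] P(2) P2(2) assms(3) by auto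
  ultimately have B2: "B2 = B"
    by simp
  have "insert (B \<union> C) (P - {B}) = insert (B \<union> C) (P2 - {B})"
    using eq unfolding join_block_def B2 .
  then have "P - {B} = P2 - {B}"
    using insert_ident[of "B \<union> C" "P - {B}" "P2 - {B}"] join_notin[OF P(1)] join_notin[OF P2(1)]
    by simp
  then show "P = P2 \<and> B = B2"
    using P(2) P2(2) B2 by (metis insert_Diff)
qed

lemma sum_refines_insert_block:
  fixes F :: "'a set set \<Rightarrow> 'b::comm_monoid_add"
  assumes "finite X" "partition_on X Q" "C \<noteq> {}" "C \<inter> X = {}"
  shows "(\<Sum>P' | refines (X \<union> C) (insert C Q) P'. F P') =
    (\<Sum>P | refines X Q P. F (insert C P) + (\<Sum>B\<in>P. F (join_block P B C)))"
proof -
  define R where "R = {P. refines X Q P}"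
  have partition: "partition_on X P" if "P \<in> R" for P
    using that unfolding R_def refines_def by simp
  have "R \<subseteq> {P. partition_on X P}"
    using partition by blast
  then have fin_R: "finite R"
    using finitely_many_partition_on[OF assms(1)] finite_subset by blast
  have fin_P: "finite P" if "P \<in> R" for P
    using finite_elements[OF assms(1) partition[OF that]] .
  have blocks_in_X: "B \<subseteq> X" if "P \<in> R" "B \<in> P" for P B
    using partition_on_block_subset[OF partition] that .
  have C_notin: "C \<notin> P" if "P \<in> R" for P
    using blocks_in_X[OF that] assms(3,4) by auto
  have inj_insert: "inj_on (insert C) R"
    by (rule inj_onI) (metis C_notin insert_ident)
  have inj_join: "inj_on (\<lambda>(P, B). join_block P B C) (SIGMA P:R. P)"
    using blocks_in_X assms(3,4) by (intro inj_on_join_block) auto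
  have disjoint_images: "insert C ` R \<inter> (\<lambda>(P, B). join_block P B C) ` (SIGMA P:R. P) = {}"
  proof -
    have "C \<notin> join_block P B C" if "P \<in> R" "B \<in> P" for P B
    proof -
      have "C \<noteq> B \<union> C"
        using blocks_in_X[OF that] partition_on_block_nonempty[OF partition[OF that(1)] that(2)] assms(4) by auto
      then show ?thesis
        using C_notin[OF that(1)] unfolding join_block_def by simp
    qed
    then show ?thesis
      by auto
  qed
  have "(\<Sum>P' | refines (X \<union> C) (insert C Q) P'. F P') =
      (\<Sum>P'\<in>insert C ` R. F P') + (\<Sum>P'\<in>(\<lambda>(P, B). join_block P B C) ` (SIGMA P:R. P). F P')"
    unfolding refines_insert_block_eq[OF assms(2-4)] R_def[symmetric]
    by (rule sum.union_disjoint) (use fin_R fin_P disjoint_images in auto)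
  also have "\<dots> = (\<Sum>P\<in>R. F (insert C P)) + (\<Sum>(P, B)\<in>(SIGMA P:R. P). F (join_block P B C))"
    unfolding sum.reindex[OF inj_insert] sum.reindex[OF inj_join] by (simp add: comp_def split_beta)
  also have "(\<Sum>(P, B)\<in>(SIGMA P:R. P). F (join_block P B C)) = (\<Sum>P\<in>R. \<Sum>B\<in>P. F (join_block P B C))"
    by (rule sum.Sigma[symmetric]) (use fin_R fin_P in auto)
  finally show ?thesis
    unfolding R_def sum.distrib .
qed

lemma card_join_block:
  assumes "finite P" "B \<in> P" "B \<union> C \<notin> P"
  shows "card (join_block P B C) = card P"
proof -
  have "card (join_block P B C) = Suc (card (P - {B}))"
    unfolding join_block_def using assms by simp
  also have "\<dots> = card P"
    using card_Suc_Diff1[OF assms(1,2)] .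
  finally show ?thesis .
qed

lemma falling_weight_step:
  fixes p :: "nat \<Rightarrow> 'r::comm_ring_1"
  assumes "p (Suc n) = p n * (x - of_nat n * y)" "n \<le> m"
  shows "p (Suc n) * y ^ (m - n) + of_nat n * (p n * y ^ (Suc m - n)) = x * (p n * y ^ (m - n))"
proof -
  have "y ^ (Suc m - n) = y * y ^ (m - n)"
    using assms(2) by (simp add: Suc_diff_le)
  then show ?thesis
    unfolding assms(1) by (simp add: algebra_simps)
qed

lemma sum_refines_insert_block_weight:
  fixes p :: "nat \<Rightarrow> 'r::comm_ring_1"
  assumes "finite X" "partition_on X Q" "X \<noteq> {}" "C \<noteq> {}" "C \<inter> X = {}"
    and p_Suc: "\<And>n. 1 \<le> n \<Longrightarrow> p (Suc n) = p n * (x - of_nat n * y)"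
  shows "(\<Sum>P' | refines (X \<union> C) (insert C Q) P'. p (card P') * y ^ (Suc (card Q) - card P'))
    = x * (\<Sum>P | refines X Q P. p (card P) * y ^ (card Q - card P))"
proof -
  have "finite Q"
    using finite_elements[OF assms(1,2)] .
  have "p (card (insert C P)) * y ^ (Suc (card Q) - card (insert C P))
      + (\<Sum>B\<in>P. p (card (join_block P B C)) * y ^ (Suc (card Q) - card (join_block P B C)))
    = x * (p (card P) * y ^ (card Q - card P))" (is "?lhs = _") if "refines X Q P" for P
  proof -
    have P: "partition_on X P"
      using that unfolding refines_def by simp
    have "finite P"
      using finite_elements[OF assms(1) P] .
    have "D \<subseteq> X" if "D \<in> P" for D
      using partition_on_block_subset[OF P that] .
    then have "C \<notin> P" and join_notin: "B \<union> C \<notin> P" for B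
      using assms(4,5) by auto
    have "1 \<le> card P"
      using \<open>finite P\<close> P assms(3) by (auto simp: Suc_le_eq card_gt_0_iff partition_on_def)
    have "card (join_block P B C) = card P" if "B \<in> P" for B
      using card_join_block[OF \<open>finite P\<close> that join_notin] .
    then have "?lhs = p (Suc (card P)) * y ^ (card Q - card P)
        + of_nat (card P) * (p (card P) * y ^ (Suc (card Q) - card P))"
      using \<open>finite P\<close> \<open>C \<notin> P\<close> by simp
    also have "\<dots> = x * (p (card P) * y ^ (card Q - card P))"
      using p_Suc[OF \<open>1 \<le> card P\<close>] refines_card_le[OF that \<open>finite Q\<close>] by (rule falling_weight_step)
    finally show ?thesis .
  qed
  then show ?thesis
    unfolding sum_refines_insert_block[OF assms(1,2,4,5)] sum_distrib_left by (intro sum.cong) auto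
qed

lemma sum_refines_falling_product:
  fixes x y :: "'r::comm_ring_1"
  assumes "finite X" "partition_on X Q" "X \<noteq> {}"
  shows "(\<Sum>P | refines X Q P. (\<Prod>j\<in>{1..<card P}. x - of_nat j * y) * y ^ (card Q - card P))
    = x ^ (card Q - 1)"
proof -
  define p where "p n = (\<Prod>j\<in>{1..<n}. x - of_nat j * y)" for n
  have p_Suc: "p (Suc n) = p n * (x - of_nat n * y)" if "1 \<le> n" for n
    unfolding p_def using that by (rule prod.atLeastLessThan_Suc)
  have "finite Q" "Q \<noteq> {}"
    using finite_elements[OF assms(1,2)] assms(2,3) by (auto simp: partition_on_def)
  then show ?thesis
    using assms unfolding p_def[symmetric]
  proof (induction Q arbitrary: X rule: finite_ne_induct)
    case (singleton C)
    have "X = {} \<union> C" "C \<noteq> {}"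
      using singleton.prems(2,3) partition_onD1 by auto
    then have "(\<Sum>P | refines X {C} P. p (card P) * y ^ (card {C} - card P)) = p 1"
      using sum_refines_insert_block[of "{}" "{}" C "\<lambda>P. p (card P) * y ^ (card {C} - card P)"]
      by (simp add: partition_on_empty refines_def)
    then show ?case
      by (simp add: p_def)
  next
    case (insert C Q)
    have "C \<noteq> {}" "C \<subseteq> X"
      using partition_on_block_nonempty[OF insert.prems(2)] partition_on_block_subset[OF insert.prems(2)] by auto
    then have X: "X = (X - C) \<union> C" "C \<inter> (X - C) = {}"
      by auto
    have "partition_on (X - C) Q"
      using partition_on_Diff_block[OF insert.prems(2), of C] insert.hyps(3) by simp
    moreover have "X - C \<noteq> {}"
      using \<open>partition_on (X - C) Q\<close> \<open>Q \<noteq> {}\<close> by (metis partition_on_empty)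
    moreover have "finite (X - C)"
      using insert.prems(1) by simp
    moreover have "card (insert C Q) = Suc (card Q)"
      using insert.hyps(1,3) by simp
    ultimately show ?case
      using sum_refines_insert_block_weight[of "X - C" Q C p x y] insert.IH[of "X - C"] p_Suc X \<open>C \<noteq> {}\<close>
        \<open>Q \<noteq> {}\<close> \<open>finite Q\<close> by (simp add: card_gt_0_iff power_eq_if)
  qed
qed

definition conn_rel :: "'a set \<Rightarrow> ('e \<Rightarrow> 'a set) \<Rightarrow> 'e set \<Rightarrow> ('a \<times> 'a) set" where
  "conn_rel V ends A = {(x, y). x \<in> V \<and> y \<in> V \<and> (x, y) \<in> (adj ends A)\<^sup>*}"

lemma ncomp_conn_rel: "ncomp V ends A = card (V // conn_rel V ends A)"
  unfolding ncomp_def conn_rel_def ..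

lemma equiv_conn_rel: "equiv V (conn_rel V ends A)"
proof (rule equivI)
  have "sym (adj ends A)"
    unfolding adj_def sym_def by (auto simp: insert_commute)
  then have "sym ((adj ends A)\<^sup>*)"
    by (rule sym_rtrancl)
  then show "sym (conn_rel V ends A)"
    unfolding sym_def conn_rel_def by blast
  show "trans (conn_rel V ends A)"
    unfolding trans_def conn_rel_def using rtrancl_trans by fast
qed (auto simp: refl_on_def conn_rel_def)

lemma ncomp_ge_1:
  assumes "finite V" "V \<noteq> {}"
  shows "1 \<le> ncomp V ends A"
proof -
  have "finite (V // conn_rel V ends A)"
    using assms(1) equiv_conn_rel by (rule finite_quotient[OF _ equiv_type])
  moreover have "V // conn_rel V ends A \<noteq> {}"
    using assms(2) by simp
  ultimately show ?thesis
    unfolding ncomp_conn_rel by (simp add: Suc_le_eq card_gt_0_iff)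
qed

lemma rtrancl_adj_induced_edges:
  assumes "partition_on V P" "A \<subseteq> (\<Union>B\<in>P. induced_edges E ends B)" "B \<in> P" "x \<in> B"
    and "(x, y) \<in> (adj ends A)\<^sup>*"
  shows "y \<in> B \<and> (x, y) \<in> (adj ends (A \<inter> induced_edges E ends B))\<^sup>*"
  using assms(5)
proof (induction rule: rtrancl_induct)
  case base
  then show ?case
    using assms(4) by simp
next
  case (step y z)
  obtain e where e: "e \<in> A" "ends e = {y, z}"
    using step.hyps(2) unfolding adj_def by blast
  then obtain B' where B': "B' \<in> P" "e \<in> induced_edges E ends B'"
    using assms(2) by blast
  then have "y \<in> B'"
    using e(2) unfolding induced_edges_def by auto
  then have "B' = B"
    using partition_on_block_unique[OF assms(1) B'(1) assms(3)] step.IH by blast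
  then have "e \<in> A \<inter> induced_edges E ends B" "z \<in> B"
    using e B'(2) unfolding induced_edges_def by auto
  then have "(y, z) \<in> adj ends (A \<inter> induced_edges E ends B)" "z \<in> B"
    using e(2) unfolding adj_def by auto
  then show ?case
    using step.IH by (meson rtrancl.rtrancl_into_rtrancl)
qed

lemma conn_rel_class_induced_edges:
  assumes "partition_on V P" "A \<subseteq> (\<Union>B\<in>P. induced_edges E ends B)" "B \<in> P" "x \<in> B"
  shows "conn_rel V ends A `` {x} = conn_rel B ends (A \<inter> induced_edges E ends B) `` {x}"
proof -
  have "B \<subseteq> V"
    using partition_on_block_subset[OF assms(1,3)] .
  moreover have "(adj ends (A \<inter> induced_edges E ends B))\<^sup>* \<subseteq> (adj ends A)\<^sup>*"
    by (rule rtrancl_mono) (auto simp: adj_def)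
  ultimately show ?thesis
    using rtrancl_adj_induced_edges[OF assms] assms(4) unfolding conn_rel_def by blast
qed

lemma quotient_conn_rel_induced_edges:
  assumes "partition_on V P" "A \<subseteq> (\<Union>B\<in>P. induced_edges E ends B)"
  shows "V // conn_rel V ends A = (\<Union>B\<in>P. B // conn_rel B ends (A \<inter> induced_edges E ends B))"
proof (intro equalityI subsetI)
  fix X assume "X \<in> V // conn_rel V ends A"
  then obtain x where X: "X = conn_rel V ends A `` {x}" and "x \<in> V"
    by (rule quotientE)
  then obtain B where B: "B \<in> P" "x \<in> B"
    using partition_onD1[OF assms(1)] by blast
  have "X \<in> B // conn_rel B ends (A \<inter> induced_edges E ends B)"
    unfolding X conn_rel_class_induced_edges[OF assms B] using B(2) by (rule quotientI)
  then show "X \<in> (\<Union>B\<in>P. B // conn_rel B ends (A \<inter> induced_edges E ends B))"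
    using B(1) by blast
next
  fix X assume "X \<in> (\<Union>B\<in>P. B // conn_rel B ends (A \<inter> induced_edges E ends B))"
  then obtain B where B: "B \<in> P" and "X \<in> B // conn_rel B ends (A \<inter> induced_edges E ends B)"
    by blast
  then obtain x where X: "X = conn_rel B ends (A \<inter> induced_edges E ends B) `` {x}" and "x \<in> B"
    by (auto elim: quotientE)
  then have "X = conn_rel V ends A `` {x}"
    using conn_rel_class_induced_edges[OF assms B] by simp
  moreover have "x \<in> V"
    using partition_on_block_subset[OF assms(1) B] \<open>x \<in> B\<close> by blast
  ultimately show "X \<in> V // conn_rel V ends A"
    by (simp add: quotientI)
qed

lemma ncomp_eq_sum_induced_edges:
  assumes "finite V" "partition_on V P" "A \<subseteq> (\<Union>B\<in>P. induced_edges E ends B)"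
  shows "ncomp V ends A = (\<Sum>B\<in>P. ncomp B ends (A \<inter> induced_edges E ends B))"
proof -
  have finite_blocks: "finite B" if "B \<in> P" for B
    using partition_on_block_subset[OF assms(2) that] assms(1) by (rule finite_subset)
  have "disjoint_family_on (\<lambda>B. B // conn_rel B ends (A \<inter> induced_edges E ends B)) P"
    unfolding disjoint_family_on_def
  proof (intro ballI impI)
    fix B B' assume "B \<in> P" "B' \<in> P" "B \<noteq> B'"
    then have "B \<inter> B' = {}"
      using disjointD[OF partition_onD2[OF assms(2)]] by blast
    then show "B // conn_rel B ends (A \<inter> induced_edges E ends B) \<inter> B' // conn_rel B' ends (A \<inter> induced_edges E ends B') = {}"
      using in_quotient_imp_subset[OF equiv_conn_rel] in_quotient_imp_non_empty[OF equiv_conn_rel] by blast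
  qed
  then have "card (\<Union>B\<in>P. B // conn_rel B ends (A \<inter> induced_edges E ends B))
      = (\<Sum>B\<in>P. card (B // conn_rel B ends (A \<inter> induced_edges E ends B)))"
    using finite_elements[OF assms(1,2)] finite_blocks
    by (intro card_UN_disjoint) (auto simp: disjoint_family_on_def finite_quotient[OF _ equiv_type[OF equiv_conn_rel]])
  then show ?thesis
    unfolding ncomp_conn_rel quotient_conn_rel_induced_edges[OF assms(2,3)] .
qed

lemma subset_induced_edges_iff_refines:
  assumes "loopless_graph V E ends" "partition_on V P" "A \<subseteq> E"
  shows "A \<subseteq> (\<Union>B\<in>P. induced_edges E ends B) \<longleftrightarrow> refines V (V // conn_rel V ends A) P"
proof
  assume A: "A \<subseteq> (\<Union>B\<in>P. induced_edges E ends B)"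
  have "\<exists>B\<in>P. X \<subseteq> B" if "X \<in> V // conn_rel V ends A" for X
  proof -
    from that obtain x where X: "X = conn_rel V ends A `` {x}" and "x \<in> V"
      by (rule quotientE)
    then obtain B where B: "B \<in> P" "x \<in> B"
      using partition_onD1[OF assms(2)] by blast
    have "X = conn_rel B ends (A \<inter> induced_edges E ends B) `` {x}"
      unfolding X by (rule conn_rel_class_induced_edges[OF assms(2) A B])
    then have "X \<subseteq> B"
      unfolding conn_rel_def by blast
    then show ?thesis
      using B(1) by blast
  qed
  then show "refines V (V // conn_rel V ends A) P"
    unfolding refines_def using assms(2) partition_on_quotient[OF equiv_conn_rel] by blast
next
  assume "refines V (V // conn_rel V ends A) P"
  then have coarser: "\<forall>X\<in>V // conn_rel V ends A. \<exists>B\<in>P. X \<subseteq> B"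
    unfolding refines_def by blast
  show "A \<subseteq> (\<Union>B\<in>P. induced_edges E ends B)"
  proof
    fix e assume "e \<in> A"
    then have "e \<in> E"
      using assms(3) by blast
    then have "card (ends e) = 2" "ends e \<subseteq> V"
      using assms(1) unfolding loopless_graph_def by auto
    then obtain x y where xy: "ends e = {x, y}" "x \<in> V" "y \<in> V"
      by (auto simp: card_2_iff)
    have "(x, y) \<in> adj ends A"
      unfolding adj_def using \<open>e \<in> A\<close> xy(1) by auto
    then have "ends e \<subseteq> conn_rel V ends A `` {x}"
      unfolding xy(1) conn_rel_def using xy(2,3) by auto
    moreover obtain B where "B \<in> P" "conn_rel V ends A `` {x} \<subseteq> B"
      using bspec[OF coarser quotientI[OF xy(2)]] by blast
    ultimately have "B \<in> P" "ends e \<subseteq> B"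
      by auto
    then show "e \<in> (\<Union>B\<in>P. induced_edges E ends B)"
      unfolding induced_edges_def using \<open>e \<in> E\<close> by blast
  qed
qed

lemma induced_edges_disjoint:
  assumes "loopless_graph V E ends" "partition_on V P" "B \<in> P" "B' \<in> P" "B \<noteq> B'"
  shows "induced_edges E ends B \<inter> induced_edges E ends B' = {}"
proof -
  have "ends e \<noteq> {}" if "e \<in> E" for e
    using assms(1) that unfolding loopless_graph_def by auto
  moreover have "B \<inter> B' = {}"
    using disjointD[OF partition_onD2[OF assms(2)] assms(3-5)] .
  ultimately show ?thesis
    unfolding induced_edges_def by blast
qed

lemma prod_sum_Pow_disjoint:
  fixes F :: "'i \<Rightarrow> 'a set \<Rightarrow> 'r::comm_semiring_1"
  assumes "finite I" "\<And>i. i \<in> I \<Longrightarrow> finite (S i)" "disjoint_family_on S I"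
  shows "(\<Prod>i\<in>I. \<Sum>X\<in>Pow (S i). F i X) = (\<Sum>A\<in>Pow (\<Union>i\<in>I. S i). \<Prod>i\<in>I. F i (A \<inter> S i))"
  using assms
proof (induction I rule: finite_induct)
  case empty
  then show ?case
    by simp
next
  case (insert i I)
  define U where "U = (\<Union>j\<in>I. S j)"
  have "S i \<inter> U = {}" and disjoint_I: "disjoint_family_on S I"
    using insert.prems(2) unfolding disjoint_family_on_insert[OF insert.hyps(2)] U_def by auto
  then have bij: "bij_betw (\<lambda>A. (A \<inter> S i, A \<inter> U)) (Pow (S i \<union> U)) (Pow (S i) \<times> Pow U)"
    by (intro bij_betw_byWitness[where f' = "\<lambda>(X, Y). X \<union> Y"]) auto
  have restrict: "A \<inter> U \<inter> S j = A \<inter> S j" if "j \<in> I" for A j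
    using that unfolding U_def by blast
  have IH: "(\<Prod>j\<in>I. \<Sum>X\<in>Pow (S j). F j X) = (\<Sum>Y\<in>Pow U. \<Prod>j\<in>I. F j (Y \<inter> S j))"
    unfolding U_def using insert.IH insert.prems(1) disjoint_I by blast
  have "(\<Prod>j\<in>insert i I. \<Sum>X\<in>Pow (S j). F j X)
      = (\<Sum>X\<in>Pow (S i). F i X) * (\<Sum>Y\<in>Pow U. \<Prod>j\<in>I. F j (Y \<inter> S j))"
    using insert.hyps IH by simp
  also have "\<dots> = (\<Sum>(X, Y)\<in>Pow (S i) \<times> Pow U. F i X * (\<Prod>j\<in>I. F j (Y \<inter> S j)))"
    unfolding sum_product sum.cartesian_product ..
  also have "\<dots> = (\<Sum>A\<in>Pow (S i \<union> U). F i (A \<inter> S i) * (\<Prod>j\<in>I. F j (A \<inter> U \<inter> S j)))"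
    using sum.reindex_bij_betw[OF bij, of "\<lambda>(X, Y). F i X * (\<Prod>j\<in>I. F j (Y \<inter> S j))"] by simp
  also have "\<dots> = (\<Sum>A\<in>Pow (\<Union>j\<in>insert i I. S j). \<Prod>j\<in>insert i I. F j (A \<inter> S j))"
    using insert.hyps restrict unfolding U_def by simp
  finally show ?case .
qed

lemma prod_induced_edges_weights:
  fixes q :: "'r::comm_ring_1"
  assumes "loopless_graph V E ends" "partition_on V P" "A \<subseteq> (\<Union>B\<in>P. induced_edges E ends B)"
  shows "(\<Prod>B\<in>P. q ^ (ncomp B ends (A \<inter> induced_edges E ends B) - 1) * (\<Prod>e\<in>A \<inter> induced_edges E ends B. v e))
    = q ^ (ncomp V ends A - card P) * (\<Prod>e\<in>A. v e)"
proof -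
  have "finite V" "finite E"
    using assms(1) unfolding loopless_graph_def by auto
  have "finite P"
    using finite_elements[OF \<open>finite V\<close> assms(2)] .
  have "1 \<le> ncomp B ends (A \<inter> induced_edges E ends B)" if "B \<in> P" for B
    using partition_on_block_subset[OF assms(2) that] \<open>finite V\<close>
    by (intro ncomp_ge_1 partition_on_block_nonempty[OF assms(2) that]) (rule finite_subset)
  then have "(\<Sum>B\<in>P. ncomp B ends (A \<inter> induced_edges E ends B) - 1)
      = (\<Sum>B\<in>P. ncomp B ends (A \<inter> induced_edges E ends B)) - card P"
    using sum_subtractf_nat[of P "\<lambda>_. 1"] by simp
  also have "\<dots> = ncomp V ends A - card P"
    using ncomp_eq_sum_induced_edges[OF \<open>finite V\<close> assms(2,3)] by simp
  finally have "(\<Prod>B\<in>P. q ^ (ncomp B ends (A \<inter> induced_edges E ends B) - 1)) = q ^ (ncomp V ends A - card P)"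
    by (simp add: power_sum[symmetric])
  moreover have "(\<Prod>B\<in>P. \<Prod>e\<in>A \<inter> induced_edges E ends B. v e) = (\<Prod>e\<in>A. v e)"
  proof -
    have "A = (\<Union>B\<in>P. A \<inter> induced_edges E ends B)"
      using assms(3) by blast
    moreover have "disjoint_family_on (\<lambda>B. A \<inter> induced_edges E ends B) P"
      using induced_edges_disjoint[OF assms(1,2)] unfolding disjoint_family_on_def by blast
    moreover have "\<forall>B\<in>P. finite (A \<inter> induced_edges E ends B)"
      using \<open>finite E\<close> unfolding induced_edges_def by simp
    ultimately show ?thesis
      using prod.UNION_disjoint_family[OF \<open>finite P\<close>, of "\<lambda>B. A \<inter> induced_edges E ends B" v] by simp
  qed
  ultimately show ?thesis
    by (simp add: prod.distrib)
qed

lemma prod_tutteZhat_induced_edges: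
  fixes q :: "'r::comm_ring_1"
  assumes "loopless_graph V E ends" "partition_on V P"
  shows "(\<Prod>B\<in>P. tutteZhat B (induced_edges E ends B) ends q v) =
    (\<Sum>A | A \<subseteq> E \<and> refines V (V // conn_rel V ends A) P. q ^ (ncomp V ends A - card P) * (\<Prod>e\<in>A. v e))"
proof -
  have "finite V" "finite E"
    using assms(1) unfolding loopless_graph_def by auto
  have "finite (induced_edges E ends B)" for B
    using \<open>finite E\<close> unfolding induced_edges_def by simp
  moreover have "disjoint_family_on (induced_edges E ends) P"
    using induced_edges_disjoint[OF assms] unfolding disjoint_family_on_def by blast
  ultimately have "(\<Prod>B\<in>P. tutteZhat B (induced_edges E ends B) ends q v)
      = (\<Sum>A\<in>Pow (\<Union>B\<in>P. induced_edges E ends B). \<Prod>B\<in>P.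
          q ^ (ncomp B ends (A \<inter> induced_edges E ends B) - 1) * (\<Prod>e\<in>A \<inter> induced_edges E ends B. v e))"
    unfolding tutteZhat_def using finite_elements[OF \<open>finite V\<close> assms(2)] by (intro prod_sum_Pow_disjoint)
  also have "\<dots> = (\<Sum>A\<in>Pow (\<Union>B\<in>P. induced_edges E ends B). q ^ (ncomp V ends A - card P) * (\<Prod>e\<in>A. v e))"
    using prod_induced_edges_weights[OF assms] by (intro sum.cong) auto
  also have "Pow (\<Union>B\<in>P. induced_edges E ends B) = {A. A \<subseteq> E \<and> refines V (V // conn_rel V ends A) P}"
    using subset_induced_edges_iff_refines[OF assms] unfolding induced_edges_def by blast
  finally show ?thesis .
qed

lemma sum_partitions_prod_tutteZhat:
  fixes V :: "'a set" and E :: "'e set" and h :: "nat \<Rightarrow> 'r::comm_ring_1"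
  assumes "loopless_graph V E ends"
  shows "(\<Sum>P | partition_on V P. h (card P) * (\<Prod>B\<in>P. tutteZhat B (induced_edges E ends B) ends q v))
    = (\<Sum>A\<in>Pow E. (\<Prod>e\<in>A. v e) *
        (\<Sum>P | refines V (V // conn_rel V ends A) P. h (card P) * q ^ (ncomp V ends A - card P)))"
proof -
  have "finite V" "finite E"
    using assms unfolding loopless_graph_def by auto
  define T where "T P A = h (card P) * (q ^ (ncomp V ends A - card P) * (\<Prod>e\<in>A. v e))"
    for P :: "'a set set" and A :: "'e set"
  have "(\<Sum>P | partition_on V P. h (card P) * (\<Prod>B\<in>P. tutteZhat B (induced_edges E ends B) ends q v))
      = (\<Sum>P | partition_on V P. \<Sum>A | A \<in> Pow E \<and> refines V (V // conn_rel V ends A) P. T P A)"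
    unfolding T_def by (intro sum.cong) (simp_all add: prod_tutteZhat_induced_edges[OF assms] sum_distrib_left)
  also have "\<dots> = (\<Sum>A\<in>Pow E. \<Sum>P | partition_on V P \<and> refines V (V // conn_rel V ends A) P. T P A)"
    using sum.swap_restrict[OF finitely_many_partition_on[OF \<open>finite V\<close>] finite_Pow_iff[THEN iffD2, OF \<open>finite E\<close>],
        of T "\<lambda>P A. refines V (V // conn_rel V ends A) P"]
    by simp
  also have "\<dots> = (\<Sum>A\<in>Pow E. (\<Prod>e\<in>A. v e) *
        (\<Sum>P | refines V (V // conn_rel V ends A) P. h (card P) * q ^ (ncomp V ends A - card P)))"
    unfolding T_def sum_distrib_left by (intro sum.cong) (auto simp: refines_def algebra_simps)
  finally show ?thesis .
qed

lemma tutteZhat_eq_sum_partitions: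
  fixes q1 q2 :: "'r::comm_ring_1"
  assumes "loopless_graph V E ends" "V \<noteq> {}"
  shows "tutteZhat V E ends q2 v =
    (\<Sum>P | partition_on V P. (\<Prod>j\<in>{1..<card P}. q2 - of_nat j * q1) *
      (\<Prod>B\<in>P. tutteZhat B (induced_edges E ends B) ends q1 v))"
proof -
  have "finite V"
    using assms(1) unfolding loopless_graph_def by auto
  have "(\<Sum>P | refines V (V // conn_rel V ends A) P.
      (\<Prod>j\<in>{1..<card P}. q2 - of_nat j * q1) * q1 ^ (ncomp V ends A - card P)) = q2 ^ (ncomp V ends A - 1)" for A
    using sum_refines_falling_product[OF \<open>finite V\<close> partition_on_quotient[OF equiv_conn_rel] assms(2)]
    unfolding ncomp_conn_rel .
  then have "tutteZhat V E ends q2 v = (\<Sum>A\<in>Pow E. (\<Prod>e\<in>A. v e) *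
      (\<Sum>P | refines V (V // conn_rel V ends A) P.
        (\<Prod>j\<in>{1..<card P}. q2 - of_nat j * q1) * q1 ^ (ncomp V ends A - card P)))"
    unfolding tutteZhat_def by (simp add: mult.commute)
  also have "\<dots> = (\<Sum>P | partition_on V P. (\<Prod>j\<in>{1..<card P}. q2 - of_nat j * q1) *
      (\<Prod>B\<in>P. tutteZhat B (induced_edges E ends B) ends q1 v))"
    by (rule sum_partitions_prod_tutteZhat[OF assms(1), symmetric])
  finally show ?thesis .
qed

lemma tutteZ_eq_mult_tutteZhat:
  assumes "finite V" "V \<noteq> {}"
  shows "tutteZ V E ends q v = q * tutteZhat V E ends q v"
proof -
  have "q ^ ncomp V ends A = q * q ^ (ncomp V ends A - 1)" for A
    using ncomp_ge_1[OF assms, of ends A] by (cases "ncomp V ends A") auto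
  then show ?thesis
    unfolding tutteZ_def tutteZhat_def sum_distrib_left by (simp add: mult.assoc)
qed

lemma tutteZ_eq_sum_partitions:
  fixes q1 q2 :: "'r::comm_ring_1"
  assumes "loopless_graph V E ends" "V \<noteq> {}"
  shows "tutteZ V E ends q2 v =
    (\<Sum>P | partition_on V P. (\<Prod>j<card P. q2 - of_nat j * q1) *
      (\<Prod>B\<in>P. tutteZhat B (induced_edges E ends B) ends q1 v))"
proof -
  have "finite V"
    using assms(1) unfolding loopless_graph_def by auto
  have "(\<Prod>j<card P. q2 - of_nat j * q1) = q2 * (\<Prod>j\<in>{1..<card P}. q2 - of_nat j * q1)"
    if "partition_on V P" for P
  proof -
    have "card P \<noteq> 0"
      using finite_elements[OF \<open>finite V\<close> that] that assms(2) by (auto simp: partition_on_def)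
    then show ?thesis
      by (simp add: lessThan_atLeast0 prod.atLeast_Suc_lessThan)
  qed
  then have "q2 * (\<Sum>P | partition_on V P. (\<Prod>j\<in>{1..<card P}. q2 - of_nat j * q1) *
      (\<Prod>B\<in>P. tutteZhat B (induced_edges E ends B) ends q1 v)) =
    (\<Sum>P | partition_on V P. (\<Prod>j<card P. q2 - of_nat j * q1) *
      (\<Prod>B\<in>P. tutteZhat B (induced_edges E ends B) ends q1 v))"
    unfolding sum_distrib_left by (intro sum.cong) (simp_all add: mult.assoc)
  then show ?thesis
    unfolding tutteZ_eq_mult_tutteZhat[OF \<open>finite V\<close> assms(2)] tutteZhat_eq_sum_partitions[OF assms, symmetric] .
qed

lemma ffall_divide_mult_power:
  fixes a b :: "'r::field"
  assumes "b \<noteq> 0"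
  shows "ffall (a / b) n * b ^ n = (\<Prod>j<n. a - of_nat j * b)"
proof -
  have "ffall (a / b) n * b ^ n = (\<Prod>j<n. (a / b - of_nat j) * b)"
    unfolding ffall_def prod.distrib by simp
  also have "\<dots> = (\<Prod>j<n. a - of_nat j * b)"
    using assms by (intro prod.cong) (simp_all add: field_simps)
  finally show ?thesis .
qed

lemma tutteZ_eq_sum_partitions_ffall:
  fixes q1 q2 :: "'r::field"
  assumes "loopless_graph V E ends" "V \<noteq> {}" "q1 \<noteq> 0"
  shows "tutteZ V E ends q2 v =
    (\<Sum>P | partition_on V P. ffall (q2 / q1) (card P) * (\<Prod>B\<in>P. tutteZ B (induced_edges E ends B) ends q1 v))"
proof -
  have "finite V"
    using assms(1) unfolding loopless_graph_def by auto
  have "(\<Prod>B\<in>P. tutteZ B (induced_edges E ends B) ends q1 v)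
      = q1 ^ card P * (\<Prod>B\<in>P. tutteZhat B (induced_edges E ends B) ends q1 v)" if "partition_on V P" for P
  proof -
    have "finite B" "B \<noteq> {}" if "B \<in> P" for B
      using partition_on_block_subset[OF \<open>partition_on V P\<close> that] \<open>finite V\<close> finite_subset
        partition_on_block_nonempty[OF \<open>partition_on V P\<close> that] by auto
    then show ?thesis
      by (simp add: tutteZ_eq_mult_tutteZhat prod.distrib)
  qed
  then have "(\<Sum>P | partition_on V P. (\<Prod>j<card P. q2 - of_nat j * q1) *
      (\<Prod>B\<in>P. tutteZhat B (induced_edges E ends B) ends q1 v))
    = (\<Sum>P | partition_on V P. ffall (q2 / q1) (card P) * (\<Prod>B\<in>P. tutteZ B (induced_edges E ends B) ends q1 v))"
    by (intro sum.cong) (simp_all add: ffall_divide_mult_power[OF assms(3), symmetric] mult.assoc)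
  from trans[OF tutteZ_eq_sum_partitions[OF assms(1,2)] this] show ?thesis .
qed

theorem proposition3p4:
  fixes V :: "'a set" and E :: "'e set" and ends :: "'e \<Rightarrow> 'a set"
    and v :: "'e \<Rightarrow> 'r::field" and q1 q2 :: 'r
  assumes "loopless_graph V E ends" and "V \<noteq> {}"
  shows "(q1 \<noteq> 0 \<longrightarrow>
           tutteZ V E ends q2 v =
           (\<Sum>P\<in>{P. partition_on V P}. ffall (q2 / q1) (card P) *
              (\<Prod>B\<in>P. tutteZ B (induced_edges E ends B) ends q1 v)))
       \<and> tutteZ V E ends q2 v =
           (\<Sum>P\<in>{P. partition_on V P}. (\<Prod>j<card P. q2 - of_nat j * q1) *
              (\<Prod>B\<in>P. tutteZhat B (induced_edges E ends B) ends q1 v))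
       \<and> tutteZhat V E ends q2 v =
           (\<Sum>P\<in>{P. partition_on V P}. (\<Prod>j\<in>{1..<card P}. q2 - of_nat j * q1) *
              (\<Prod>B\<in>P. tutteZhat B (induced_edges E ends B) ends q1 v))"
  by (intro conjI impI tutteZ_eq_sum_partitions_ffall[OF assms] tutteZ_eq_sum_partitions[OF assms]
      tutteZhat_eq_sum_partitions[OF assms])

end
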